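(* Let $G$ be a finite simple group and $c:X\twoheadrightarrow G$ a surjective generalized subgroup of $G$. Then every non-trivial homomorphism $f:X\to G$ can be written as $f=hc$ for some automorphism $h:G\to G$.
   Context: A homomorphism $c:X\to G$ is a generalized subgroup of $G$ if the map $\mathrm{Hom}(X,X)\to\mathrm{Hom}(X,G)$, $g\mapsto cg$, is injective. *)

theory Defs
  imports "HOL-Algebra.Algebra"
begin

text \<open>Homomorphisms are identified
  when they agree on the carrier of X (HOL functions are total).\<close>
definition generalized_subgroup :: "('a, 'c) monoid_scheme \<Rightarrow> ('b, 'd) monoid_scheme \<Rightarrow> ('a \<Rightarrow> 'b) \<Rightarrow> bool"
  where "generalized_subgroup A H c \<longleftrightarrow> c \<in> hom A H \<and>
    (\<forall>g1\<in>hom A A. \<forall>g2\<in>hom A A.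
       (\<forall>x\<in>carrier A. c (g1 x) = c (g2 x)) \<longrightarrow> (\<forall>x\<in>carrier A. g1 x = g2 x))"

end

theory Submission
  imports Defs
begin

(*
  The proof shows that the kernel N of c lies
  in the kernel of f; then f factors as f = h o c with h : G -> G, and h is an
  automorphism because G is simple and finite.

  Hence N is central (conjugation by z in N is the identity).
  4. For c surjective onto finite G, the transfer K -> N is an endomorphism that is
     z |-> z^|G| on N; hence N has exponent dividing |G|.
  5. If f(N) = f(K), then f(K) is abelian; composing f with a character of f(K) and
     raising an element of N of order q to that power gives a non-trivial endomorphism
     of K into N, a contradiction unless f(K) = 1.
  6. Simplicity: c(ker f) is normal in G, so it is G (then 5 applies) or trivial (then
     ker f = N by counting).
*)

text \<open>If the fibres of f refine those of g on S and g takes at least as many values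
  as f (finitely many), then the fibres coincide: g is f followed by an injection.\<close>
lemma fibres_coincide:
  assumes refine: "\<And>x y. x \<in> S \<Longrightarrow> y \<in> S \<Longrightarrow> f x = f y \<Longrightarrow> g x = g y"
    and fin: "finite (f ` S)" and card: "card (f ` S) \<le> card (g ` S)"
    and x: "x \<in> S" and y: "y \<in> S" and gxy: "g x = g y"
  shows "f x = f y"
proof -
  define \<theta> where "\<theta> a = g (SOME x. x \<in> S \<and> f x = a)" for a
  have \<theta>: "\<theta> (f x) = g x" if "x \<in> S" for x
  proof -
    have "(SOME x'. x' \<in> S \<and> f x' = f x) \<in> S \<and> f (SOME x'. x' \<in> S \<and> f x' = f x) = f x"
      using that by (rule someI[of _ x, OF conjI]) simp
    then show ?thesis unfolding \<theta>_def using refine that by blast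
  qed
  have "g ` S = \<theta> ` f ` S" using \<theta> by (force simp: image_image)
  then have "card (\<theta> ` f ` S) = card (f ` S)"
    using card card_image_le[OF fin, of \<theta>] by simp
  then have "inj_on \<theta> (f ` S)" by (rule eq_card_imp_inj_on[OF fin])
  then show ?thesis using \<theta> x y gxy by (metis image_eqI inj_onD)
qed

lemma (in group_hom) eq_iff_kernel:
  assumes "x \<in> carrier G" "y \<in> carrier G"
  shows "h x = h y \<longleftrightarrow> inv x \<otimes> y \<in> kernel G H h"
proof -
  have hx: "h x \<in> carrier H" and hy: "h y \<in> carrier H" using assms by simp_all
  have "h x = h y \<longleftrightarrow> inv\<^bsub>H\<^esub> h x \<otimes>\<^bsub>H\<^esub> h y = \<one>\<^bsub>H\<^esub>"
  proof
    assume "inv\<^bsub>H\<^esub> h x \<otimes>\<^bsub>H\<^esub> h y = \<one>\<^bsub>H\<^esub>"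
    moreover have "h y = h x \<otimes>\<^bsub>H\<^esub> (inv\<^bsub>H\<^esub> h x \<otimes>\<^bsub>H\<^esub> h y)"
      using hx hy by (simp add: H.m_assoc[symmetric])
    ultimately show "h x = h y" using hx by simp
  qed (use hy in simp)
  then show ?thesis using assms by (simp add: kernel_def)
qed

section \<open>Characters of finite abelian groups\<close>

lemma (in group) maximal_proper_subgroup:
  assumes fin: "finite (carrier G)" and nontriv: "carrier G \<noteq> {\<one>}"
  obtains H where "subgroup H G" "H \<noteq> carrier G"
    and "\<And>H'. subgroup H' G \<Longrightarrow> H \<subseteq> H' \<Longrightarrow> H' = H \<or> H' = carrier G"
proof -
  let ?proper = "\<lambda>H. subgroup H G \<and> H \<noteq> carrier G"
  have triv: "?proper {\<one>}" using triv_subgroup nontriv by blast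
  have bounded: "\<forall>H. ?proper H \<longrightarrow> card H < Suc (card (carrier G))"
    using fin by (metis card_mono less_Suc_eq_le subgroup.subset)
  obtain H where H: "?proper H" and greatest: "\<forall>H'. ?proper H' \<longrightarrow> card H' \<le> card H"
    using ex_has_greatest_nat[OF triv bounded] by iprover
  have "H' = H \<or> H' = carrier G" if "subgroup H' G" "H \<subseteq> H'" for H'
  proof (rule disjCI)
    assume "H' \<noteq> carrier G"
    then have "card H' \<le> card H" using greatest that(1) by blast
    moreover have "finite H'" using fin subgroup.subset[OF that(1)] finite_subset by blast
    ultimately show "H' = H" using that(2) by (metis card_seteq)
  qed
  then show ?thesis using that H by blast
qed

lemma (in comm_group) quotient_by_maximal_is_cyclic:
  assumes H: "subgroup H G"
    and maximal: "\<And>H'. subgroup H' G \<Longrightarrow> H \<subseteq> H' \<Longrightarrow> H' = H \<or> H' = carrier G"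
    and b: "b \<in> carrier G" "b \<notin> H" and a: "a \<in> carrier G"
  shows "\<exists>k::int. H #> a = (H #> b) [^]\<^bsub>G Mod H\<^esub> k"
proof -
  interpret normal H G using H by (rule subgroup_imp_normal)
  interpret Q: comm_group "G Mod H" using H by (rule abelian_FactGroup)
  interpret \<pi>: group_hom G "G Mod H" "\<lambda>a. H #> a"
    using r_coset_hom_Mod by unfold_locales
  define \<beta> where "\<beta> = H #> b"
  have \<beta>: "\<beta> \<in> carrier (G Mod H)" using b \<beta>_def by simp
  define T where "T = {a \<in> carrier G. \<exists>k::int. H #> a = \<beta> [^]\<^bsub>G Mod H\<^esub> k}"
  have "subgroup T G"
  proof (rule subgroupI)
    show "T \<subseteq> carrier G" unfolding T_def by blast
    have "H #> \<one> = \<beta> [^]\<^bsub>G Mod H\<^esub> (0::int)" using \<pi>.hom_one by simp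
    then show "T \<noteq> {}" unfolding T_def by blast
  next
    fix a assume "a \<in> T"
    then obtain k :: int where a: "a \<in> carrier G" "H #> a = \<beta> [^]\<^bsub>G Mod H\<^esub> k"
      unfolding T_def by blast
    then have "H #> inv a = \<beta> [^]\<^bsub>G Mod H\<^esub> (- k)" using \<beta> by (simp add: Q.int_pow_neg)
    then show "inv a \<in> T" unfolding T_def using a by blast
  next
    fix a a' assume "a \<in> T" "a' \<in> T"
    then obtain k k' :: int where a: "a \<in> carrier G" "H #> a = \<beta> [^]\<^bsub>G Mod H\<^esub> k"
      and a': "a' \<in> carrier G" "H #> a' = \<beta> [^]\<^bsub>G Mod H\<^esub> k'" unfolding T_def by blast
    then have "H #> (a \<otimes> a') = \<beta> [^]\<^bsub>G Mod H\<^esub> (k + k')" using \<beta> by (simp add: Q.int_pow_mult)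
    then show "a \<otimes> a' \<in> T" unfolding T_def using a a' by blast
  qed
  moreover have "H \<subseteq> T"
  proof
    fix h assume h: "h \<in> H"
    then have "H #> h = \<beta> [^]\<^bsub>G Mod H\<^esub> (0::int)" using rcos_const[OF is_group h] by simp
    then show "h \<in> T" unfolding T_def using h subset by blast
  qed
  moreover have "b \<in> T"
  proof -
    have "H #> b = \<beta> [^]\<^bsub>G Mod H\<^esub> (1::int)" using Q.int_pow_1[OF \<beta>] \<beta>_def by simp
    then show ?thesis unfolding T_def using b by blast
  qed
  ultimately have "T = carrier G" using maximal b(2) by blast
  then show ?thesis using a unfolding T_def \<beta>_def by blast
qed

text \<open>Every non-trivial finite abelian group has a surjective character \<chi> onto Z/q for
  some q > 1, represented as an integer-valued map additive modulo q and sending some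
  element b to 1; the order of b is then a multiple of q.\<close>
lemma (in comm_group) cyclic_character:
  assumes fin: "finite (carrier G)" and nontriv: "carrier G \<noteq> {\<one>}"
  obtains q :: nat and b and \<chi> :: "'a \<Rightarrow> int"
  where "1 < q" "b \<in> carrier G" "int q dvd \<chi> b - 1"
    and "\<And>x y. x \<in> carrier G \<Longrightarrow> y \<in> carrier G \<Longrightarrow> int q dvd \<chi> (x \<otimes> y) - (\<chi> x + \<chi> y)"
    and "\<And>n::nat. b [^] n = \<one> \<Longrightarrow> q dvd n"
proof -
  obtain H where H: "subgroup H G" "H \<noteq> carrier G"
    and maximal: "\<And>H'. subgroup H' G \<Longrightarrow> H \<subseteq> H' \<Longrightarrow> H' = H \<or> H' = carrier G"
    using maximal_proper_subgroup[OF fin nontriv] by blast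
  obtain b where b: "b \<in> carrier G" "b \<notin> H" using H subgroup.subset by blast
  interpret normal H G using H(1) by (rule subgroup_imp_normal)
  interpret Q: comm_group "G Mod H" using H(1) by (rule abelian_FactGroup)
  interpret \<pi>: group_hom G "G Mod H" "\<lambda>a. H #> a"
    using r_coset_hom_Mod by unfold_locales
  define \<beta> where "\<beta> = H #> b"
  have \<beta>: "\<beta> \<in> carrier (G Mod H)" using b \<beta>_def by simp
  obtain \<chi> :: "'a \<Rightarrow> int" where \<chi>: "\<And>a. a \<in> carrier G \<Longrightarrow> H #> a = \<beta> [^]\<^bsub>G Mod H\<^esub> \<chi> a"
    using quotient_by_maximal_is_cyclic[OF H(1) maximal b] \<beta>_def by metis
  define q where "q = Q.ord \<beta>"
  have "finite (carrier (G Mod H))" using fin by (simp add: carrier_FactGroup)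
  then have "1 \<le> q" unfolding q_def using Q.ord_ge_1 \<beta> by blast
  moreover have "q \<noteq> 1"
  proof -
    have "\<beta> \<noteq> \<one>\<^bsub>G Mod H\<^esub>" using \<beta>_def b rcos_self[OF b(1) H(1)] by auto
    then show ?thesis unfolding q_def using Q.ord_eq_1[OF \<beta>] by simp
  qed
  ultimately have "1 < q" by linarith
  moreover have "int q dvd \<chi> b - 1"
  proof -
    have "\<beta> [^]\<^bsub>G Mod H\<^esub> (1::int) = \<beta> [^]\<^bsub>G Mod H\<^esub> \<chi> b"
      using \<chi>[OF b(1)] \<beta>_def Q.int_pow_1[OF \<beta>] by simp
    then show ?thesis using Q.int_pow_eq[OF \<beta>] q_def by blast
  qed
  moreover have "int q dvd \<chi> (x \<otimes> y) - (\<chi> x + \<chi> y)" if "x \<in> carrier G" "y \<in> carrier G" for x y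
  proof -
    have "\<beta> [^]\<^bsub>G Mod H\<^esub> (\<chi> x + \<chi> y)
        = (\<beta> [^]\<^bsub>G Mod H\<^esub> \<chi> x) \<otimes>\<^bsub>G Mod H\<^esub> (\<beta> [^]\<^bsub>G Mod H\<^esub> \<chi> y)"
      using \<beta> by (rule Q.int_pow_mult)
    also have "\<dots> = H #> (x \<otimes> y)" using that by (simp only: \<chi> \<pi>.hom_mult)
    also have "\<dots> = \<beta> [^]\<^bsub>G Mod H\<^esub> \<chi> (x \<otimes> y)" using that by (simp add: \<chi>)
    finally show ?thesis using Q.int_pow_eq[OF \<beta>] q_def by simp
  qed
  moreover have "q dvd n" if "b [^] n = \<one>" for n :: nat
  proof -
    have "\<beta> [^]\<^bsub>G Mod H\<^esub> n = \<one>\<^bsub>G Mod H\<^esub>"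
      using that b \<beta>_def \<pi>.hom_nat_pow[symmetric] \<pi>.hom_one by metis
    then show ?thesis using Q.pow_eq_id[OF \<beta>] q_def by simp
  qed
  ultimately show ?thesis using that b(1) by blast
qed

section \<open>Generalized subgroups\<close>

locale generalized_subgroup_of = K: group K + G: group G
  for K (structure) and G (structure) and c +
  assumes generalized: "generalized_subgroup K G c"
begin

sublocale group_hom K G c
  using generalized unfolding generalized_subgroup_def by unfold_locales blast

abbreviation N where "N \<equiv> kernel K G c"

lemma endo_eqI:
  assumes "g1 \<in> hom K K" "g2 \<in> hom K K" "\<And>x. x \<in> carrier K \<Longrightarrow> c (g1 x) = c (g2 x)"
    and "x \<in> carrier K"
  shows "g1 x = g2 x"
  using generalized assms unfolding generalized_subgroup_def by blast

lemma endo_trivial: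
  assumes "\<phi> \<in> hom K K" "\<And>x. x \<in> carrier K \<Longrightarrow> \<phi> x \<in> N" "x \<in> carrier K"
  shows "\<phi> x = \<one>"
proof (rule endo_eqI[OF assms(1) _ _ assms(3)])
  show "(\<lambda>_. \<one>) \<in> hom K K" by (rule homI) auto
  show "\<And>x. x \<in> carrier K \<Longrightarrow> c (\<phi> x) = c \<one>"
    using assms(2) unfolding kernel_def by simp
qed

text \<open>The kernel of c is central: conjugation by z \<in> N agrees with the identity after c.\<close>
lemma kernel_central:
  assumes z: "z \<in> N" and x: "x \<in> carrier K"
  shows "z \<otimes> x = x \<otimes> z"
proof -
  have zK: "z \<in> carrier K" and cz: "c z = \<one>\<^bsub>G\<^esub>" using z unfolding kernel_def by auto
  have cancel: "inv z \<otimes> (z \<otimes> u) = u" if "u \<in> carrier K" for u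
    using zK that by (simp add: K.m_assoc[symmetric])
  have conj_hom: "(\<lambda>x. z \<otimes> x \<otimes> inv z) \<in> hom K K"
    using zK by (intro homI) (simp_all add: K.m_assoc cancel)
  have "z \<otimes> x \<otimes> inv z = x"
  proof (rule endo_eqI[OF conj_hom _ _ x])
    show "(\<lambda>x. x) \<in> hom K K" by (rule homI) auto
    show "\<And>y. y \<in> carrier K \<Longrightarrow> c (z \<otimes> y \<otimes> inv z) = c y"
      using zK cz by simp
  qed
  then show ?thesis using zK x by (metis K.inv_solve_right K.m_closed)
qed

lemma kernel_comm_group: "comm_group (K\<lparr>carrier := N\<rparr>)"
proof -
  interpret Ngrp: group "K\<lparr>carrier := N\<rparr>"
    using subgroup_kernel by (rule K.subgroup_imp_group)
  show ?thesis
  proof (rule Ngrp.group_comm_groupI)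
    fix x y assume "x \<in> carrier (K\<lparr>carrier := N\<rparr>)" "y \<in> carrier (K\<lparr>carrier := N\<rparr>)"
    then have "x \<in> N" and "y \<in> carrier K" using subgroup.subset[OF subgroup_kernel] by auto
    then have "x \<otimes> y = y \<otimes> x" by (rule kernel_central)
    then show "x \<otimes>\<^bsub>K\<lparr>carrier := N\<rparr>\<^esub> y = y \<otimes>\<^bsub>K\<lparr>carrier := N\<rparr>\<^esub> x" by simp
  qed
qed

text \<open>If \<psi> : K \<rightarrow> Z is additive modulo the order of w \<in> N, then x \<mapsto> w^(\<psi> x) is an
  endomorphism of K into N, hence trivial.\<close>
lemma kernel_power_character_trivial:
  assumes w: "w \<in> N"
    and additive: "\<And>x y. x \<in> carrier K \<Longrightarrow> y \<in> carrier K
                     \<Longrightarrow> int (K.ord w) dvd \<psi> (x \<otimes> y) - (\<psi> x + \<psi> y)"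
    and x: "x \<in> carrier K"
  shows "w [^] \<psi> x = \<one>"
proof -
  have wK: "w \<in> carrier K" using w subgroup.subset[OF subgroup_kernel] by blast
  have "(\<lambda>x. w [^] \<psi> x) \<in> hom K K"
  proof (rule homI)
    fix x y assume "x \<in> carrier K" "y \<in> carrier K"
    then have "w [^] \<psi> (x \<otimes> y) = w [^] (\<psi> x + \<psi> y)"
      using K.int_pow_eq[OF wK] additive by (simp add: dvd_diff_commute)
    then show "w [^] \<psi> (x \<otimes> y) = w [^] \<psi> x \<otimes> w [^] \<psi> y" using wK by (simp add: K.int_pow_mult)
  qed (use wK in simp)
  moreover have "w [^] (k::int) \<in> N" for k
    using w by (rule K.subgroup_int_pow_closed[OF subgroup_kernel])
  ultimately show ?thesis using endo_trivial x by blast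
qed

text \<open>If f maps N onto f(K), then f(K) is abelian, because N is central.\<close>
lemma image_comm_group_if_kernel_covers:
  assumes hom: "f \<in> hom K H" and H: "group H" and cover: "f ` N = f ` carrier K"
  shows "comm_group (H\<lparr>carrier := f ` carrier K\<rparr>)"
proof -
  interpret H: group H by (rule H)
  interpret f: group_hom K H f by unfold_locales (rule hom)
  interpret A: group "H\<lparr>carrier := f ` carrier K\<rparr>"
    using f.img_is_subgroup by (rule H.subgroup_imp_group)
  show ?thesis
  proof (rule A.group_comm_groupI)
    fix a a' assume "a \<in> carrier (H\<lparr>carrier := f ` carrier K\<rparr>)" "a' \<in> carrier (H\<lparr>carrier := f ` carrier K\<rparr>)"
    then have "a \<in> f ` N" "a' \<in> f ` N" using cover by simp_all
    then obtain z z' where z: "z \<in> N" "z' \<in> N" and a: "a = f z" "a' = f z'" by blast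
    have zK: "z \<in> carrier K" "z' \<in> carrier K" using z subgroup.subset[OF subgroup_kernel] by auto
    have "f z \<otimes>\<^bsub>H\<^esub> f z' = f (z \<otimes> z')" using zK by simp
    also have "\<dots> = f (z' \<otimes> z)" using kernel_central[OF z(1) zK(2)] by simp
    also have "\<dots> = f z' \<otimes>\<^bsub>H\<^esub> f z" using zK by simp
    finally show "a \<otimes>\<^bsub>H\<lparr>carrier := f ` carrier K\<rparr>\<^esub> a' = a' \<otimes>\<^bsub>H\<lparr>carrier := f ` carrier K\<rparr>\<^esub> a"
      using a by simp
  qed
qed

end

section \<open>The transfer into the kernel\<close>

locale surjective_generalized_subgroup = generalized_subgroup_of +
  assumes onto: "c ` carrier K = carrier G"
    and finite_target: "finite (carrier G)"
begin

lemma kernel_mult: "u \<otimes>\<^bsub>K\<lparr>carrier := N\<rparr>\<^esub> v = u \<otimes> v"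
  by simp

interpretation Ngrp: comm_group "K\<lparr>carrier := N\<rparr>" by (rule kernel_comm_group)

definition lift :: "'c \<Rightarrow> 'a"
  where "lift g = (SOME t. t \<in> carrier K \<and> c t = g)"

lemma lift:
  assumes "g \<in> carrier G"
  shows "lift g \<in> carrier K \<and> c (lift g) = g"
proof -
  have "g \<in> c ` carrier K" using assms onto by simp
  then obtain t where "t \<in> carrier K" "c t = g" by blast
  then show ?thesis unfolding lift_def by (rule someI[of _ t, OF conjI])
qed

text \<open>The transfer of K into its central subgroup N, with respect to the section lift:
  the product over all g \<in> G of the N-components of x acting on the coset of g.\<close>
definition transfer_factor :: "'a \<Rightarrow> 'c \<Rightarrow> 'a"
  where "transfer_factor x g = inv (lift (c x \<otimes>\<^bsub>G\<^esub> g)) \<otimes> x \<otimes> lift g"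

definition transfer :: "'a \<Rightarrow> 'a"
  where "transfer x = finprod (K\<lparr>carrier := N\<rparr>) (transfer_factor x) (carrier G)"

lemma transfer_factor_in_kernel:
  assumes x: "x \<in> carrier K" and g: "g \<in> carrier G"
  shows "transfer_factor x g \<in> N"
proof -
  have cxg: "c x \<otimes>\<^bsub>G\<^esub> g \<in> carrier G" using x g by simp
  have "c (transfer_factor x g) = inv\<^bsub>G\<^esub> (c x \<otimes>\<^bsub>G\<^esub> g) \<otimes>\<^bsub>G\<^esub> c x \<otimes>\<^bsub>G\<^esub> g"
    unfolding transfer_factor_def using lift[OF cxg] lift[OF g] x by simp
  also have "\<dots> = \<one>\<^bsub>G\<^esub>" using x g by (simp add: G.m_assoc G.inv_mult_group)
  finally show ?thesis
    unfolding kernel_def transfer_factor_def using lift[OF cxg] lift[OF g] x by simp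
qed

text \<open>The cocycle identity behind the multiplicativity of the transfer.\<close>
lemma transfer_factor_mult:
  assumes x: "x \<in> carrier K" and y: "y \<in> carrier K" and g: "g \<in> carrier G"
  shows "transfer_factor (x \<otimes> y) g = transfer_factor x (c y \<otimes>\<^bsub>G\<^esub> g) \<otimes> transfer_factor y g"
proof -
  define r where "r = lift (c x \<otimes>\<^bsub>G\<^esub> (c y \<otimes>\<^bsub>G\<^esub> g))"
  define s where "s = lift (c y \<otimes>\<^bsub>G\<^esub> g)"
  have rs: "r \<in> carrier K" "s \<in> carrier K" "lift g \<in> carrier K"
    unfolding r_def s_def using lift x y g by simp_all
  have "transfer_factor (x \<otimes> y) g = inv r \<otimes> (x \<otimes> y) \<otimes> lift g"
    unfolding transfer_factor_def r_def using x y g by (simp add: G.m_assoc K.m_assoc)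
  also have "\<dots> = inv r \<otimes> x \<otimes> (s \<otimes> inv s) \<otimes> y \<otimes> lift g"
    using rs x y by (simp add: K.m_assoc)
  also have "\<dots> = (inv r \<otimes> x \<otimes> s) \<otimes> (inv s \<otimes> y \<otimes> lift g)"
    using rs x y by (simp only: K.m_assoc K.m_closed K.inv_closed)
  finally show ?thesis unfolding transfer_factor_def r_def s_def .
qed

text \<open>On the central subgroup N every transfer factor of z is z itself.\<close>
lemma transfer_factor_on_kernel:
  assumes z: "z \<in> N" and g: "g \<in> carrier G"
  shows "transfer_factor z g = z"
proof -
  have zK: "z \<in> carrier K" and cz: "c z = \<one>\<^bsub>G\<^esub>" using z unfolding kernel_def by auto
  have l: "lift g \<in> carrier K" using lift g by simp
  have "transfer_factor z g = inv (lift g) \<otimes> (z \<otimes> lift g)"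
    unfolding transfer_factor_def using cz g zK l by (simp add: K.m_assoc)
  also have "\<dots> = z" using kernel_central[OF z l] zK l by (simp add: K.m_assoc[symmetric])
  finally show ?thesis .
qed

lemma transfer_in_kernel:
  assumes "x \<in> carrier K"
  shows "transfer x \<in> N"
proof -
  have "transfer_factor x \<in> carrier G \<rightarrow> carrier (K\<lparr>carrier := N\<rparr>)"
    using transfer_factor_in_kernel[OF assms] by simp
  then show ?thesis unfolding transfer_def using Ngrp.finprod_closed by simp
qed

lemma transfer_hom: "transfer \<in> hom K K"
proof (rule homI)
  show "transfer x \<in> carrier K" if "x \<in> carrier K" for x
    using transfer_in_kernel[OF that] subgroup.subset[OF subgroup_kernel] by blast
next
  fix x y assume x: "x \<in> carrier K" and y: "y \<in> carrier K"
  have cy: "c y \<in> carrier G" using y by simp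
  have factors: "transfer_factor u \<in> carrier G \<rightarrow> carrier (K\<lparr>carrier := N\<rparr>)" if "u \<in> carrier K" for u
    using transfer_factor_in_kernel[OF that] by simp
  have shift: "(\<lambda>g. transfer_factor x (c y \<otimes>\<^bsub>G\<^esub> g)) \<in> carrier G \<rightarrow> carrier (K\<lparr>carrier := N\<rparr>)"
    using transfer_factor_in_kernel[OF x] cy by simp
  have product_in_kernel:
    "transfer_factor x (c y \<otimes>\<^bsub>G\<^esub> g) \<otimes> transfer_factor y g \<in> N" if "g \<in> carrier G" for g
    using transfer_factor_in_kernel[OF x] transfer_factor_in_kernel[OF y] cy that
      subgroup.m_closed[OF subgroup_kernel] by simp
  have "transfer (x \<otimes> y) = finprod (K\<lparr>carrier := N\<rparr>)
      (\<lambda>g. transfer_factor x (c y \<otimes>\<^bsub>G\<^esub> g) \<otimes>\<^bsub>K\<lparr>carrier := N\<rparr>\<^esub> transfer_factor y g) (carrier G)"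
    unfolding transfer_def
    by (intro Ngrp.finprod_cong') (auto simp: transfer_factor_mult[OF x y] product_in_kernel)
  also have "\<dots> = finprod (K\<lparr>carrier := N\<rparr>) (\<lambda>g. transfer_factor x (c y \<otimes>\<^bsub>G\<^esub> g)) (carrier G)
      \<otimes>\<^bsub>K\<lparr>carrier := N\<rparr>\<^esub> transfer y"
    unfolding transfer_def by (rule Ngrp.finprod_multf[OF shift factors[OF y]])
  also have "finprod (K\<lparr>carrier := N\<rparr>) (\<lambda>g. transfer_factor x (c y \<otimes>\<^bsub>G\<^esub> g)) (carrier G)
      = finprod (K\<lparr>carrier := N\<rparr>) (transfer_factor x) ((\<lambda>g. c y \<otimes>\<^bsub>G\<^esub> g) ` carrier G)"
    by (rule Ngrp.finprod_reindex[symmetric])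
      (use factors[OF x] G.surj_const_mult[OF cy] G.inj_on_cmult[OF cy] in simp_all)
  also have "\<dots> = transfer x" unfolding transfer_def G.surj_const_mult[OF cy] ..
  finally have "transfer (x \<otimes> y) = transfer x \<otimes>\<^bsub>K\<lparr>carrier := N\<rparr>\<^esub> transfer y" .
  then show "transfer (x \<otimes> y) = transfer x \<otimes> transfer y" by (simp only: kernel_mult)
qed

lemma transfer_on_kernel:
  assumes z: "z \<in> N"
  shows "transfer z = z [^] card (carrier G)"
proof -
  have "transfer z = finprod (K\<lparr>carrier := N\<rparr>) (\<lambda>_. z) (carrier G)"
    unfolding transfer_def using z transfer_factor_on_kernel by (intro Ngrp.finprod_cong') auto
  also have "\<dots> = z [^]\<^bsub>K\<lparr>carrier := N\<rparr>\<^esub> card (carrier G)"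
    using z by (simp add: Ngrp.finprod_const)
  also have "\<dots> = z [^] card (carrier G)" by (simp add: nat_pow_def)
  finally show ?thesis .
qed

text \<open>Since the transfer maps into N, it is trivial; so N has exponent dividing |G|.\<close>
lemma kernel_exponent:
  assumes "z \<in> N"
  shows "z [^] card (carrier G) = \<one>"
proof -
  have "transfer z = \<one>"
    using endo_trivial[OF transfer_hom transfer_in_kernel] assms
    by (simp add: kernel_def)
  then show ?thesis using transfer_on_kernel[OF assms] by simp
qed

lemma kernel_ord_nonzero:
  assumes "y \<in> N"
  shows "K.ord y \<noteq> 0"
proof -
  have "0 < card (carrier G)" using finite_target G.one_closed card_gt_0_iff by blast
  then show ?thesis
    using kernel_exponent[OF assms] K.ord_eq_0 subgroup.subset[OF subgroup_kernel] assms
    by blast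
qed

section \<open>Homomorphisms out of K\<close>

text \<open>If f maps N onto f(K) with f(K) finite, then f is trivial: otherwise a character of
  the abelian group f(K) onto Z/q, together with an element of order q in N, yields a
  non-trivial endomorphism of K into N.\<close>
lemma image_of_kernel_trivial:
  assumes hom: "f \<in> hom K H" and H: "group H" and fin: "finite (f ` carrier K)"
    and cover: "f ` N = f ` carrier K"
  shows "f ` carrier K = {\<one>\<^bsub>H\<^esub>}"
proof (rule ccontr)
  assume nontriv: "f ` carrier K \<noteq> {\<one>\<^bsub>H\<^esub>}"
  interpret H: group H by (rule H)
  interpret f: group_hom K H f by unfold_locales (rule hom)
  let ?A = "H\<lparr>carrier := f ` carrier K\<rparr>"
  interpret A: comm_group ?A using image_comm_group_if_kernel_covers[OF hom H cover] .
  have "finite (carrier ?A)" "carrier ?A \<noteq> {\<one>\<^bsub>?A\<^esub>}" using fin nontriv by simp_all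
  then obtain q b \<chi> where q: "1 < q" and b: "b \<in> carrier ?A" and \<chi>b: "int q dvd \<chi> b - 1"
    and \<chi>: "\<And>a a'. a \<in> carrier ?A \<Longrightarrow> a' \<in> carrier ?A
              \<Longrightarrow> int q dvd \<chi> (a \<otimes>\<^bsub>?A\<^esub> a') - (\<chi> a + \<chi> a')"
    and q_dvd: "\<And>n::nat. b [^]\<^bsub>?A\<^esub> n = \<one>\<^bsub>?A\<^esub> \<Longrightarrow> q dvd n"
    using A.cyclic_character by metis
  have "b \<in> f ` N" using b cover by simp
  then obtain y where y: "y \<in> N" "f y = b" by blast
  have yK: "y \<in> carrier K" using y subgroup.subset[OF subgroup_kernel] by blast
  define n where "n = K.ord y"
  have "b [^]\<^bsub>?A\<^esub> n = b [^]\<^bsub>H\<^esub> n" by (rule H.nat_pow_consistent[symmetric])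
  also have "\<dots> = f (y [^] n)" using f.hom_nat_pow[OF yK, of n] y by simp
  also have "\<dots> = \<one>\<^bsub>?A\<^esub>" using yK unfolding n_def by simp
  finally obtain m where n: "n = q * m" using q_dvd by blast
  define w where "w = y [^] m"
  have wK: "w \<in> carrier K" unfolding w_def using yK by simp
  have ord_w: "K.ord w = q"
    unfolding w_def using K.ord_pow[OF yK, of m] kernel_ord_nonzero[OF y(1)] n n_def by simp
  have w: "w \<in> N"
    using K.subgroup_int_pow_closed[OF subgroup_kernel y(1), of "int m"] yK
    unfolding w_def by (simp add: int_pow_int)
  have "w [^] \<chi> (f y) = \<one>"
  proof (rule kernel_power_character_trivial[OF w _ yK])
    show "int (K.ord w) dvd \<chi> (f (x \<otimes> x')) - (\<chi> (f x) + \<chi> (f x'))"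
      if "x \<in> carrier K" "x' \<in> carrier K" for x x'
      using \<chi>[of "f x" "f x'"] that ord_w by simp
  qed
  moreover have "w [^] \<chi> (f y) = w"
    using K.int_pow_eq[OF wK, of 1 "\<chi> b"] \<chi>b ord_w y wK by simp
  ultimately have "K.ord w = 1" using K.ord_eq_1[OF wK] by simp
  then show False using ord_w q by simp
qed

lemma kernel_covers_image:
  assumes hom: "f \<in> hom K H" and H: "group H" and full: "c ` kernel K H f = carrier G"
  shows "f ` N = f ` carrier K"
proof (rule equalityI)
  show "f ` N \<subseteq> f ` carrier K" using image_mono[OF subgroup.subset[OF subgroup_kernel]] .
  interpret H: group H by (rule H)
  interpret f: group_hom K H f by unfold_locales (rule hom)
  show "f ` carrier K \<subseteq> f ` N"
  proof
    fix a assume "a \<in> f ` carrier K"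
    then obtain x where x: "a = f x" "x \<in> carrier K" by (rule imageE)
    then have "c x \<in> c ` kernel K H f" using full by simp
    then obtain m where m: "c x = c m" "m \<in> kernel K H f" by (rule imageE)
    have mK: "m \<in> carrier K" using m(2) by (simp add: kernel_def)
    have z: "inv m \<otimes> x \<in> N" using eq_iff_kernel[OF mK x(2)] m(1) by simp
    have "a = f (inv m \<otimes> x)" using x mK m(2) by (simp add: kernel_def)
    then show "a \<in> f ` N" by (rule rev_image_eqI[OF z])
  qed
qed

lemma kernel_in_kernel_by_counting:
  assumes hom: "f \<in> hom K H" and H: "group H" and fin: "finite (f ` carrier K)"
    and card: "card (f ` carrier K) \<le> card (carrier G)" and sub: "kernel K H f \<subseteq> N"
  shows "N \<subseteq> kernel K H f"
proof
  interpret H: group H by (rule H)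
  interpret f: group_hom K H f by unfold_locales (rule hom)
  have refine: "c x = c y" if "x \<in> carrier K" "y \<in> carrier K" "f x = f y" for x y
    using f.eq_iff_kernel eq_iff_kernel that sub by blast
  have card': "card (f ` carrier K) \<le> card (c ` carrier K)" using card onto by simp
  fix z assume "z \<in> N"
  then have z: "z \<in> carrier K" "c z = c \<one>" by (simp_all add: kernel_def)
  have "f z = f \<one>"
    by (rule fibres_coincide[of "carrier K" f c, OF refine fin card' z(1) K.one_closed z(2)])
  then show "z \<in> kernel K H f" using z by (simp add: kernel_def)
qed

lemma kernel_in_kernel:
  assumes simple: "simple_group G" and hom: "f \<in> hom K G"
  shows "N \<subseteq> kernel K G f"
proof -
  interpret f: group_hom K G f by unfold_locales (rule hom)
  interpret S: simple_group G by (rule simple)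
  have fin: "finite (f ` carrier K)" using finite_subset[OF hom_carrier[OF hom] finite_target] .
  have "c ` kernel K G f \<lhd> G"
    using normal.surj_hom_normal_subgroup[OF f.normal_kernel _ onto] group_hom_axioms by blast
  then consider "c ` kernel K G f = carrier G" | "c ` kernel K G f = {\<one>\<^bsub>G\<^esub>}"
    using S.no_real_normal_subgroup by blast
  then show ?thesis
  proof cases
    case 1
    then have "f ` carrier K = {\<one>\<^bsub>G\<^esub>}"
      using image_of_kernel_trivial[OF hom G.is_group fin] kernel_covers_image[OF hom G.is_group]
      by simp
    then show ?thesis using subgroup.subset[OF subgroup_kernel] by (auto simp: kernel_def)
  next
    case 2
    then have "kernel K G f \<subseteq> N" by (auto simp: kernel_def)
    moreover have "card (f ` carrier K) \<le> card (carrier G)"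
      using card_mono[OF finite_target hom_carrier[OF hom]] .
    ultimately show ?thesis using kernel_in_kernel_by_counting[OF hom G.is_group fin] by blast
  qed
qed

lemma factor_through:
  assumes hom: "f \<in> hom K H" and H: "group H" and sub: "N \<subseteq> kernel K H f"
  shows "(\<lambda>g. f (lift g)) \<in> hom G H" and "\<And>x. x \<in> carrier K \<Longrightarrow> f (lift (c x)) = f x"
proof -
  interpret H: group H by (rule H)
  interpret f: group_hom K H f by unfold_locales (rule hom)
  show hc: "f (lift (c x)) = f x" if "x \<in> carrier K" for x
  proof -
    have "lift (c x) \<in> carrier K" "c (lift (c x)) = c x" using lift[of "c x"] that by simp_all
    then show ?thesis using f.eq_iff_kernel eq_iff_kernel that sub by blast
  qed
  show "(\<lambda>g. f (lift g)) \<in> hom G H"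
  proof (rule homI)
    show "f (lift g) \<in> carrier H" if "g \<in> carrier G" for g using lift that by simp
    fix g g' assume "g \<in> carrier G" "g' \<in> carrier G"
    then have l: "lift g \<in> carrier K" "lift g' \<in> carrier K" "c (lift g) = g" "c (lift g') = g'"
      using lift by simp_all
    then have "f (lift (g \<otimes>\<^bsub>G\<^esub> g')) = f (lift (c (lift g \<otimes> lift g')))" by simp
    also have "\<dots> = f (lift g \<otimes> lift g')" using l by (intro hc) simp
    finally show "f (lift (g \<otimes>\<^bsub>G\<^esub> g')) = f (lift g) \<otimes>\<^bsub>H\<^esub> f (lift g')" using l by simp
  qed
qed

theorem factors_through_automorphism:
  assumes simple: "simple_group G" and hom: "f \<in> hom K G"
    and nontrivial: "\<exists>x\<in>carrier K. f x \<noteq> \<one>\<^bsub>G\<^esub>"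
  shows "\<exists>h\<in>iso G G. \<forall>x\<in>carrier K. f x = h (c x)"
proof -
  interpret S: simple_group G by (rule simple)
  define h where "h g = f (lift g)" for g
  note factor = factor_through[OF hom G.is_group kernel_in_kernel[OF simple hom], folded h_def]
  interpret h: group_hom G G h by unfold_locales (rule factor(1))
  have "kernel G G h \<noteq> carrier G"
  proof
    assume "kernel G G h = carrier G"
    then have "h (c x) = \<one>\<^bsub>G\<^esub>" if "x \<in> carrier K" for x
      using that unfolding kernel_def by (metis (mono_tags, lifting) hom_closed mem_Collect_eq)
    then show False using nontrivial factor(2) by simp
  qed
  then have "kernel G G h = {\<one>\<^bsub>G\<^esub>}" using S.no_real_normal_subgroup[OF h.normal_kernel] by blast
  then have inj: "inj_on h (carrier G)" by (rule h.trivial_ker_imp_inj)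
  then have "h ` carrier G = carrier G" using endo_inj_surj finite_target h.hom_closed by blast
  then have "h \<in> iso G G" using factor(1) inj unfolding iso_def bij_betw_def by blast
  then show ?thesis using factor(2) by metis
qed

end

theorem lemma8p3:
  fixes K :: "('a, 'c) monoid_scheme" and G :: "('b, 'd) monoid_scheme"
  assumes "group K"
    and "simple_group G" and "finite (carrier G)"
    and "generalized_subgroup K G c"
    and "c ` carrier K = carrier G"
    and "f \<in> hom K G"
    and "\<exists>x\<in>carrier K. f x \<noteq> \<one>\<^bsub>G\<^esub>"
  shows "\<exists>h\<in>iso G G. \<forall>x\<in>carrier K. f x = h (c x)"
proof -
  have "group G" using assms(2) by (rule simple_group.axioms)
  then interpret surjective_generalized_subgroup K G c
    using assms by (intro surjective_generalized_subgroup.intro generalized_subgroup_of.intro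
        surjective_generalized_subgroup_axioms.intro generalized_subgroup_of_axioms.intro)
  show ?thesis using factors_through_automorphism assms by blast
qed

end
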